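(* Let $L$ be a finite-dimensional pure, nonnilpotent, solvable Lie algebra over $\mathbb{C}$ of breadth $2$ such that $\dim[L,L]=2$ and $\dim L^k=1$ for all integers $k\geq 2$. Then for some positive integer $n$, $L$ has a basis $\{x_1,x_2,z_1,z_2,\ldots,z_n,z\}$ such that one of the following holds: (1) $n$ is even and the only nonzero brackets of basis elements (up to antisymmetry) are $[x_1,x_2]=x_1$ and $[z_i,z_{i+1}]=z$ for all $i=1,3,5,\ldots,n-1$; or (2) $n$ is odd and the only nonzero brackets of basis elements (up to antisymmetry) are $[x_1,x_2]=x_1$, $[x_2,z_1]=z$ and $[z_i,z_{i+1}]=z$ for all $i=2,4,6,\ldots,n-1$.
   Context: For $x\in L$, the breadth of $x$ is $b(x)=\mathrm{rank}(\mathrm{ad}_x)$, and $b(L)=\max\{b(x)\mid x\in L\}$. $L$ is pure if it has no abelian ideal as a direct summand; equivalently $Z(L)\subseteq[L,L]$, where $Z(L)$ is the center. The lower central series is indexed by $L^0=L$, $L^1=[L,L]$ and $L^k=[L,L^{k-1}]$ for $k\geq 2$. *)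

theory Defs
  imports Complex_Main
begin

definition lie_algebra :: "(complex \<Rightarrow> 'a::ab_group_add \<Rightarrow> 'a) \<Rightarrow> ('a \<Rightarrow> 'a \<Rightarrow> 'a) \<Rightarrow> bool" where
  "lie_algebra sc br \<longleftrightarrow>
     vector_space sc \<and>
     (\<forall>x. Vector_Spaces.linear sc sc (br x)) \<and>
     (\<forall>y. Vector_Spaces.linear sc sc (\<lambda>x. br x y)) \<and>
     (\<forall>x. br x x = 0) \<and>
     (\<forall>x y z. br x (br y z) + br y (br z x) + br z (br x y) = 0)"

definition fin_dim :: "(complex \<Rightarrow> 'a::ab_group_add \<Rightarrow> 'a) \<Rightarrow> bool" where
  "fin_dim sc \<longleftrightarrow> (\<exists>B. finite B \<and> module.span sc B = UNIV)"

primrec lcs :: "(complex \<Rightarrow> 'a::ab_group_add \<Rightarrow> 'a) \<Rightarrow> ('a \<Rightarrow> 'a \<Rightarrow> 'a) \<Rightarrow> nat \<Rightarrow> 'a set" where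
  "lcs sc br 0 = UNIV"
| "lcs sc br (Suc k) = module.span sc {br x y | x y. y \<in> lcs sc br k}"

primrec derived :: "(complex \<Rightarrow> 'a::ab_group_add \<Rightarrow> 'a) \<Rightarrow> ('a \<Rightarrow> 'a \<Rightarrow> 'a) \<Rightarrow> nat \<Rightarrow> 'a set" where
  "derived sc br 0 = UNIV"
| "derived sc br (Suc k) = module.span sc {br x y | x y. x \<in> derived sc br k \<and> y \<in> derived sc br k}"

definition nilpotent_lie :: "(complex \<Rightarrow> 'a::ab_group_add \<Rightarrow> 'a) \<Rightarrow> ('a \<Rightarrow> 'a \<Rightarrow> 'a) \<Rightarrow> bool" where
  "nilpotent_lie sc br \<longleftrightarrow> (\<exists>k. lcs sc br k = {0})"

definition solvable_lie :: "(complex \<Rightarrow> 'a::ab_group_add \<Rightarrow> 'a) \<Rightarrow> ('a \<Rightarrow> 'a \<Rightarrow> 'a) \<Rightarrow> bool" where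
  "solvable_lie sc br \<longleftrightarrow> (\<exists>k. derived sc br k = {0})"

definition lie_ideal :: "(complex \<Rightarrow> 'a::ab_group_add \<Rightarrow> 'a) \<Rightarrow> ('a \<Rightarrow> 'a \<Rightarrow> 'a) \<Rightarrow> 'a set \<Rightarrow> bool" where
  "lie_ideal sc br I \<longleftrightarrow> module.subspace sc I \<and> (\<forall>x y. y \<in> I \<longrightarrow> br x y \<in> I)"

definition pure_lie :: "(complex \<Rightarrow> 'a::ab_group_add \<Rightarrow> 'a) \<Rightarrow> ('a \<Rightarrow> 'a \<Rightarrow> 'a) \<Rightarrow> bool" where
  "pure_lie sc br \<longleftrightarrow>
     \<not> (\<exists>I J. lie_ideal sc br I \<and> lie_ideal sc br J \<and> I \<noteq> {0} \<and>
             (\<forall>x\<in>I. \<forall>y\<in>I. br x y = 0) \<and>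
             I \<inter> J = {0} \<and> {a + b | a b. a \<in> I \<and> b \<in> J} = UNIV)"

definition breadth_elem :: "(complex \<Rightarrow> 'a::ab_group_add \<Rightarrow> 'a) \<Rightarrow> ('a \<Rightarrow> 'a \<Rightarrow> 'a) \<Rightarrow> 'a \<Rightarrow> nat" where
  "breadth_elem sc br x = vector_space.dim sc (range (br x))"

definition breadth :: "(complex \<Rightarrow> 'a::ab_group_add \<Rightarrow> 'a) \<Rightarrow> ('a \<Rightarrow> 'a \<Rightarrow> 'a) \<Rightarrow> nat" where
  "breadth sc br = Max (range (breadth_elem sc br))"

end

theory Submission
  imports Defs
begin

(*
  The lower central series pins down the derived algebra D = [L,L]: L^2 = [L,D] is a line
  span {w}, and since L^3 is nonzero some a satisfies [a,w] = w.  Jacobi shows that D commutes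
  with w, so D = span {z, w} with z central and [a,z] = 0, and purity puts the centre into D.
  On the slice V = {k. [k,w] = 0 and [a,k] in span {z}}, which together with a and w spans L,
  both [a,-] and the bracket take values in span {z}, and their common radical is span {z}.
  A Darboux-type induction splits off pairs [p,q] = z one at a time, correcting a by elements
  of V, until what is left is span {z} or span {z1, z} with [a',z1] = -z.  These two outcomes
  are the even and the odd normal form, with x1 = w and x2 = -a'.
*)

context vector_space
begin

lemma independent_insert_kernel:
  assumes "module_hom scale scale T" and "independent S"
    and "\<And>s. s \<in> S \<Longrightarrow> T s = 0" and "T x \<noteq> 0"
  shows "independent (insert x S)" and "x \<notin> S"
proof -
  have "x \<notin> span S"
    using module_hom.eq_0_on_span[OF assms(1)] assms(3,4) by blast
  then show "independent (insert x S)" "x \<notin> S"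
    using independent_insertI[OF _ assms(2)] span_base by auto
qed

lemma in_span_singletonE:
  assumes "y \<in> span {x}"
  obtains c where "y = c *s x"
  using assms by (auto simp: span_singleton)

lemma in_span_pairE:
  assumes "y \<in> span {x, x'}"
  obtains c c' where "y = c *s x + c' *s x'"
proof -
  obtain c where "y - c *s x \<in> span {x'}"
    using assms span_breakdown_eq by blast
  then obtain c' where "y - c *s x = c' *s x'"
    by (rule in_span_singletonE)
  then show thesis
    using that[of c c'] by (simp add: algebra_simps)
qed

lemma in_span_insert_pairI:
  assumes "v + s *s p + t *s q \<in> span H"
  shows "v \<in> span (insert p (insert q H))"
proof -
  have "v - (- s) *s p \<in> span (insert q H)"
    unfolding span_breakdown_eq using assms by (intro exI[of _ "- t"]) simp
  then show ?thesis
    using span_breakdown_eq by blast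
qed

lemma span_insert_pair_eq:
  assumes "subspace V" "p \<in> V" "q \<in> V" "H \<subseteq> V"
    and "\<And>v. v \<in> V \<Longrightarrow> \<exists>s t. v + s *s p + t *s q \<in> span H"
  shows "V = span (insert p (insert q H))"
proof
  show "span (insert p (insert q H)) \<subseteq> V"
    using assms(1-4) by (intro span_minimal) auto
  show "V \<subseteq> span (insert p (insert q H))"
    using assms(5) in_span_insert_pairI by blast
qed

lemma span_extend_pairs:
  assumes "subspace V" "p \<in> V" "q \<in> V" "V' \<subseteq> V"
    and "\<And>v. v \<in> V \<Longrightarrow> \<exists>s t. v + s *s p + t *s q \<in> V'"
    and "V' = span (E \<union> (P ` {..<m} \<union> Q ` {..<m}))"
  shows "V = span (E \<union> (P(m := p) ` {..<Suc m} \<union> Q(m := q) ` {..<Suc m}))"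
proof -
  let ?H = "E \<union> (P ` {..<m} \<union> Q ` {..<m})"
  have "?H \<subseteq> V"
    using assms(4,6) span_superset[of ?H] by (simp only:)
  moreover have "\<exists>s t. v + s *s p + t *s q \<in> span ?H" if "v \<in> V" for v
    using assms(5)[OF that] by (simp only: assms(6))
  ultimately have "V = span (insert p (insert q ?H))"
    by (rule span_insert_pair_eq[OF assms(1-3)])
  moreover have "E \<union> (P(m := p) ` {..<Suc m} \<union> Q(m := q) ` {..<Suc m}) = insert p (insert q ?H)"
    by (auto simp: lessThan_Suc)
  ultimately show ?thesis
    by (simp only:)
qed

lemma subspace_dim_one_eq_span_singleton:
  assumes "subspace S" and "dim S = 1"
  obtains w where "w \<noteq> 0" and "S = span {w}"
proof -
  obtain B where B: "B \<subseteq> S" "independent B" "S \<subseteq> span B" "card B = dim S"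
    using basis_exists by blast
  then obtain w where "B = {w}"
    using assms(2) card_1_singleton_iff[of B] by auto
  moreover have "span B = S"
    using B span_minimal[OF B(1) assms(1)] by blast
  ultimately show thesis
    using that B(2) by auto
qed

lemma exists_complement_of_line:
  assumes "subspace S" and "k \<notin> S"
  obtains J where "subspace J" "S \<subseteq> J" "span {k} \<inter> J = {0}"
    "{u + v | u v. u \<in> span {k} \<and> v \<in> J} = UNIV"
proof -
  obtain E where E: "E \<subseteq> S" "independent E" "S \<subseteq> span E"
    using maximal_independent_subset[of S] by blast
  have "span E = S"
    using E span_minimal[OF E(1) assms(1)] by blast
  then have kE: "k \<notin> span E"
    using assms(2) by simp
  then have kE_indep: "independent (insert k E)"
    using independent_insertI[OF _ E(2)] by blast
  define B where "B = extend_basis (insert k E)"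
  have kB: "insert k E \<subseteq> B" and iB: "independent B" and sB: "span B = UNIV"
    unfolding B_def using extend_basis_superset independent_extend_basis span_extend_basis kE_indep
    by auto
  let ?J = "span (B - {k})"
  have "S \<subseteq> ?J"
    using \<open>span E = S\<close> kE kB span_mono[of E "B - {k}"] span_base[of k E] by blast
  moreover have k: "k \<notin> ?J"
    using iB kB dependent_def by blast
  moreover have "span {k} \<inter> ?J = {0}"
  proof -
    have "c = 0" if "c *s k \<in> ?J" for c
      using that k span_scale[of "c *s k" "B - {k}" "inverse c"] by (cases "c = 0") auto
    then show ?thesis
      by (auto simp: span_singleton span_zero)
  qed
  moreover have "y \<in> {u + v | u v. u \<in> span {k} \<and> v \<in> ?J}" for y
  proof -
    have "insert k (B - {k}) = B"
      using kB by blast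
    then obtain c where "y - c *s k \<in> ?J"
      using sB span_breakdown_eq[of y k "B - {k}"] by auto
    moreover have "c *s k \<in> span {k}" "y = c *s k + (y - c *s k)"
      by (simp_all add: span_base span_scale)
    ultimately show ?thesis
      by blast
  qed
  ultimately show thesis
    using that[of ?J] subspace_span[of "B - {k}"] by blast
qed

end

context finite_dimensional_vector_space
begin

lemma dim_two_exists_notin_span_singleton:
  assumes "dim S = 2"
  obtains v where "v \<in> S" "v \<notin> span {w}"
proof (rule ccontr)
  assume "\<not> thesis"
  then have "S \<subseteq> span {w}"
    using that by blast
  then have "dim S \<le> dim (span {w})"
    by (rule dim_subset)
  then show False
    using assms by (simp split: if_splits)
qed

lemma dim_two_eq_span_pair:
  assumes "subspace S" "dim S = 2" "z \<in> S" "w \<in> S" "w \<noteq> 0" "z \<notin> span {w}"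
  shows "S = span {z, w}"
proof -
  have "independent {z, w}"
    using assms(5,6) by (simp add: independent_insert)
  moreover have "z \<noteq> w"
    using assms(6) span_base[of w "{w}"] by auto
  ultimately have "dim S \<le> dim {z, w}"
    using assms(2) by (simp add: dim_eq_card_independent)
  then have "span {z, w} = span S"
    using assms(3,4) by (intro dim_eq_span) auto
  then show ?thesis
    using span_eq_iff[THEN iffD2, OF assms(1)] by metis
qed

end

(* Positions 1, 2, 3, 4, ... carry P 0, Q 0, P 1, Q 1, ...; position 0 is junk. *)
definition interleave :: "(nat \<Rightarrow> 'b) \<Rightarrow> (nat \<Rightarrow> 'b) \<Rightarrow> nat \<Rightarrow> 'b"
  where "interleave P Q i = (if odd i then P (i div 2) else Q (i div 2 - 1))"

lemma interleave_image: "interleave P Q ` {1..2 * m} = P ` {..<m} \<union> Q ` {..<m}"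
proof
  show "interleave P Q ` {1..2 * m} \<subseteq> P ` {..<m} \<union> Q ` {..<m}"
  proof
    fix y assume "y \<in> interleave P Q ` {1..2 * m}"
    then obtain i where i: "1 \<le> i" "i \<le> 2 * m" and y: "y = interleave P Q i"
      by auto
    show "y \<in> P ` {..<m} \<union> Q ` {..<m}"
    proof (cases "odd i")
      case True
      then have "i div 2 < m" using i by presburger
      then show ?thesis using True y unfolding interleave_def by auto
    next
      case False
      then have "i div 2 - 1 < m" using i by presburger
      then show ?thesis using False y unfolding interleave_def by auto
    qed
  qed
  show "P ` {..<m} \<union> Q ` {..<m} \<subseteq> interleave P Q ` {1..2 * m}"
  proof
    fix y assume "y \<in> P ` {..<m} \<union> Q ` {..<m}"
    then consider j where "j < m" "y = P j" | j where "j < m" "y = Q j"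
      by blast
    then show "y \<in> interleave P Q ` {1..2 * m}"
    proof cases
      case 1
      then show ?thesis by (intro image_eqI[of _ _ "2 * j + 1"]) (auto simp: interleave_def)
    next
      case 2
      then show ?thesis by (intro image_eqI[of _ _ "2 * j + 2"]) (auto simp: interleave_def)
    qed
  qed
qed

definition prepend :: "'b \<Rightarrow> (nat \<Rightarrow> 'b) \<Rightarrow> nat \<Rightarrow> 'b"
  where "prepend x f i = (if i = 1 then x else f (i - 1))"

lemma prepend_interleave_image:
  "prepend x (interleave P Q) ` {1..2 * m + 1} = insert x (P ` {..<m} \<union> Q ` {..<m})"
proof -
  have "prepend x (interleave P Q) ` {1..2 * m + 1} = insert x (interleave P Q ` {1..2 * m})"
  proof (intro equalityI subsetI)
    fix y assume "y \<in> prepend x (interleave P Q) ` {1..2 * m + 1}"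
    then obtain i where "i \<in> {1..2 * m + 1}" "y = prepend x (interleave P Q) i"
      by blast
    then show "y \<in> insert x (interleave P Q ` {1..2 * m})"
      unfolding prepend_def by (cases "i = 1") (auto intro!: image_eqI[of _ _ "i - 1"])
  next
    fix y assume "y \<in> insert x (interleave P Q ` {1..2 * m})"
    then consider "y = x" | i where "i \<in> {1..2 * m}" "y = interleave P Q i"
      by blast
    then show "y \<in> prepend x (interleave P Q) ` {1..2 * m + 1}"
    proof cases
      case 1
      then show ?thesis unfolding prepend_def by (intro image_eqI[of _ _ 1]) auto
    next
      case 2
      then show ?thesis unfolding prepend_def by (intro image_eqI[of _ _ "i + 1"]) auto
    qed
  qed
  then show ?thesis
    by (simp only: interleave_image)
qed

locale finite_dimensional_lie_algebra = finite_dimensional_vector_space scale Basis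
  for scale :: "'k::field \<Rightarrow> 'a::ab_group_add \<Rightarrow> 'a" (infixr \<open>*s\<close> 75)
    and Basis :: "'a set" +
  fixes br :: "'a \<Rightarrow> 'a \<Rightarrow> 'a"
  assumes br_add_right: "br x (y + y') = br x y + br x y'"
    and br_scale_right: "br x (c *s y) = c *s br x y"
    and br_add_left: "br (x + x') y = br x y + br x' y"
    and br_scale_left: "br (c *s x) y = c *s br x y"
    and br_self: "br x x = 0"
    and jacobi: "br x (br y t) + br y (br t x) + br t (br x y) = 0"
begin

lemma module_hom_br: "module_hom scale scale (br x)"
  by unfold_locales (simp_all add: br_add_right br_scale_right)

lemma module_hom_br_left: "module_hom scale scale (\<lambda>x. br x y)"
  by unfold_locales (simp_all add: br_add_left br_scale_left)

lemmas br_zero_right[simp] = module_hom.zero[OF module_hom_br]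
  and br_neg_right = module_hom.neg[OF module_hom_br]
  and br_diff_right = module_hom.diff[OF module_hom_br]
  and br_zero_left[simp] = module_hom.zero[OF module_hom_br_left]
  and br_neg_left = module_hom.neg[OF module_hom_br_left]
  and br_diff_left = module_hom.diff[OF module_hom_br_left]

lemma br_anticomm: "br y x = - br x y"
proof -
  have "0 = br (x + y) (x + y)" by (rule br_self[symmetric])
  also have "\<dots> = br x x + br y x + (br x y + br y y)" by (simp only: br_add_left br_add_right)
  also have "\<dots> = br x y + br y x" by (simp add: br_self)
  finally have "br x y + br y x = 0" by simp
  then show ?thesis by (simp add: add_eq_0_iff)
qed

lemma br_eq_0_commute: "br y x = 0 \<longleftrightarrow> br x y = 0"
  by (subst br_anticomm) simp

lemmas bracket_simps = br_add_right br_scale_right br_add_left br_scale_left br_self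
  br_neg_right br_diff_right br_neg_left br_diff_left

definition hyperbolic_pairs :: "'a \<Rightarrow> 'a \<Rightarrow> 'a set \<Rightarrow> nat \<Rightarrow> (nat \<Rightarrow> 'a) \<Rightarrow> (nat \<Rightarrow> 'a) \<Rightarrow> bool"
  where "hyperbolic_pairs z c V m P Q \<longleftrightarrow>
    (\<forall>j<m. P j \<in> V \<and> Q j \<in> V \<and> br (P j) (Q j) = z \<and> br c (P j) = 0 \<and> br c (Q j) = 0) \<and>
    (\<forall>j<m. \<forall>k<m. br (P j) (P k) = 0 \<and> br (Q j) (Q k) = 0 \<and> (j \<noteq> k \<longrightarrow> br (P j) (Q k) = 0))"

(*
  Writing [a,k] = \<lambda>(k) z and [k,k'] = \<omega>(k,k') z, this says that \<lambda> and \<omega> are a linear and an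
  alternating form on V whose common radical is span {z}.  The normal form below is a Darboux
  basis for \<omega> adapted to \<lambda>, after replacing a by some c in a + V.
*)
definition darboux_data :: "'a \<Rightarrow> 'a \<Rightarrow> 'a set \<Rightarrow> bool"
  where "darboux_data z a V \<longleftrightarrow> subspace V \<and> z \<in> V \<and>
    (\<forall>k\<in>V. br a k \<in> span {z}) \<and> (\<forall>k\<in>V. \<forall>k'\<in>V. br k k' \<in> span {z}) \<and>
    (\<forall>k\<in>V. br a k = 0 \<and> (\<forall>k'\<in>V. br k k' = 0) \<longrightarrow> k \<in> span {z})"

definition darboux_normal_form :: "'a \<Rightarrow> 'a \<Rightarrow> 'a set \<Rightarrow> bool"
  where "darboux_normal_form z a V \<longleftrightarrow> (\<exists>c m P Q. c - a \<in> V \<and> hyperbolic_pairs z c V m P Q \<and>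
    (V = span (insert z (P ` {..<m} \<union> Q ` {..<m})) \<or>
     (\<exists>z1\<in>V. br c z1 = - z \<and> (\<forall>j<m. br z1 (P j) = 0 \<and> br z1 (Q j) = 0) \<and>
        V = span (insert z1 (insert z (P ` {..<m} \<union> Q ` {..<m}))))))"

lemma darboux_normal_form_abelian:
  assumes data: "darboux_data z a V" and abelian: "\<forall>k\<in>V. \<forall>k'\<in>V. br k k' = 0"
  shows "darboux_normal_form z a V"
proof -
  have V: "subspace V" and zV: "z \<in> V" and aV: "\<forall>k\<in>V. br a k \<in> span {z}"
    and radical: "\<forall>k\<in>V. br a k = 0 \<longrightarrow> k \<in> span {z}"
    using data abelian unfolding darboux_data_def by auto
  have no_pairs: "a - a \<in> V \<and> hyperbolic_pairs z a V 0 P Q" for P Q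
    using subspace_0[OF V] unfolding hyperbolic_pairs_def by simp
  show ?thesis
  proof (cases "\<forall>k\<in>V. br a k = 0")
    case True
    then have "V = span {z}"
      using radical span_minimal[of "{z}" V] V zV by auto
    then show ?thesis
      unfolding darboux_normal_form_def using no_pairs by fastforce
  next
    case False
    then obtain k0 c where k0: "k0 \<in> V" "br a k0 = c *s z" "c \<noteq> 0"
      using aV by (metis in_span_singletonE scale_zero_left)
    define z1 where "z1 = (- inverse c) *s k0"
    have z1V: "z1 \<in> V"
      unfolding z1_def by (rule subspace_scale[OF V k0(1)])
    have az1: "br a z1 = - z"
      using k0 by (simp add: z1_def br_scale_right br_neg_right)
    have "V \<subseteq> span {z1, z}"
    proof
      fix v assume v: "v \<in> V"
      then obtain d where d: "br a v = d *s z"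
        using aV in_span_singletonE by blast
      have "v + d *s z1 \<in> V" and "br a (v + d *s z1) = 0"
        using v z1V V
        by (simp_all add: subspace_add subspace_scale br_add_right br_scale_right d az1)
      have "v + d *s z1 \<in> span {z}"
        using radical \<open>v + d *s z1 \<in> V\<close> \<open>br a (v + d *s z1) = 0\<close> by blast
      then obtain e where "v + d *s z1 = e *s z"
        by (rule in_span_singletonE)
      then have "v + d *s z1 + (- e) *s z \<in> span {}"
        by simp
      then show "v \<in> span {z1, z}"
        by (rule in_span_insert_pairI)
    qed
    then have "V = span {z1, z}"
      using span_minimal[of "{z1, z}" V] V z1V zV by auto
    then show ?thesis
      unfolding darboux_normal_form_def using no_pairs z1V az1 by fastforce
  qed
qed

lemma exists_shift_into_centralizer:
  assumes data: "darboux_data z a V" and p: "p \<in> V" and q: "q \<in> V" and pq: "br p q = z"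
    and v: "v \<in> V"
  shows "\<exists>s t. v + s *s p + t *s q \<in> {k \<in> V. br p k = 0 \<and> br q k = 0}"
proof -
  have V: "subspace V" and VV: "\<forall>k\<in>V. \<forall>k'\<in>V. br k k' \<in> span {z}"
    using data unfolding darboux_data_def by auto
  obtain \<alpha> \<beta> where \<alpha>: "br p v = \<alpha> *s z" and \<beta>: "br q v = \<beta> *s z"
    using VV p q v by (meson in_span_singletonE)
  have qp: "br q p = - z"
    using pq br_anticomm[of q p] by simp
  have "v + \<beta> *s p + (- \<alpha>) *s q \<in> V"
    using V p q v by (intro subspace_add subspace_scale)
  moreover have "br p (v + \<beta> *s p + (- \<alpha>) *s q) = 0" "br q (v + \<beta> *s p + (- \<alpha>) *s q) = 0"
    by (simp_all add: bracket_simps \<alpha> \<beta> pq qp)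
  ultimately show ?thesis
    by blast
qed

lemma darboux_data_centralizer:
  assumes data: "darboux_data z a V" and z_central: "\<forall>y. br y z = 0"
    and p: "p \<in> V" and q: "q \<in> V" and pq: "br p q = z"
    and u: "\<And>k. k \<in> {k \<in> V. br p k = 0 \<and> br q k = 0} \<Longrightarrow> br u k = 0"
  shows "darboux_data z (a - u) {k \<in> V. br p k = 0 \<and> br q k = 0}"
proof -
  let ?V' = "{k \<in> V. br p k = 0 \<and> br q k = 0}"
  have V: "subspace V" and zV: "z \<in> V" and aV: "\<forall>k\<in>V. br a k \<in> span {z}"
    and VV: "\<forall>k\<in>V. \<forall>k'\<in>V. br k k' \<in> span {z}"
    and radical: "\<forall>k\<in>V. br a k = 0 \<and> (\<forall>k'\<in>V. br k k' = 0) \<longrightarrow> k \<in> span {z}"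
    using data unfolding darboux_data_def by auto
  have "?V' = V \<inter> {k. br p k = 0} \<inter> {k. br q k = 0}"
    by auto
  then have "subspace ?V'"
    using module_hom.subspace_kernel[OF module_hom_br] V by (simp add: subspace_inter)
  moreover have "z \<in> ?V'"
    using zV z_central by simp
  moreover have "br (a - u) k \<in> span {z}" if "k \<in> ?V'" for k
    using that aV u by (simp add: br_diff_left)
  moreover have "k \<in> span {z}"
    if k: "k \<in> ?V'" and ak: "br (a - u) k = 0" and kV': "\<forall>k'\<in>?V'. br k k' = 0" for k
  proof -
    have "br k v = 0" if v: "v \<in> V" for v
    proof -
      obtain s t where "v + s *s p + t *s q \<in> ?V'"
        using exists_shift_into_centralizer[OF data p q pq v] by blast
      then have "br k (v + s *s p + t *s q) = 0"
        using kV' by blast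
      moreover have "br k p = 0" "br k q = 0"
        using k br_eq_0_commute by auto
      ultimately show ?thesis
        by (simp add: bracket_simps)
    qed
    moreover have "br a k = 0"
      using ak u[OF k] by (simp add: br_diff_left)
    ultimately show ?thesis
      using radical k by blast
  qed
  ultimately show ?thesis
    unfolding darboux_data_def using VV by blast
qed

lemma darboux_data_reduce:
  assumes data: "darboux_data z a V" and z_central: "\<forall>y. br y z = 0"
    and p: "p \<in> V" and q: "q \<in> V" and pq: "br p q = z"
  obtains a' where "a' - a \<in> V" "br a' p = 0" "br a' q = 0"
    "darboux_data z a' {k \<in> V. br p k = 0 \<and> br q k = 0}"
proof -
  have V: "subspace V" and aV: "\<forall>k\<in>V. br a k \<in> span {z}"
    using data unfolding darboux_data_def by auto
  obtain \<alpha> \<beta> where \<alpha>: "br a p = \<alpha> *s z" and \<beta>: "br a q = \<beta> *s z"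
    using aV p q by (meson in_span_singletonE)
  have qp: "br q p = - z"
    using pq br_anticomm[of q p] by simp
  define u where "u = \<beta> *s p - \<alpha> *s q"
  have "(a - u) - a \<in> V"
    unfolding u_def using V p q by (simp add: subspace_neg subspace_diff subspace_scale)
  moreover have "br (a - u) p = 0" "br (a - u) q = 0"
    by (simp_all add: u_def bracket_simps \<alpha> \<beta> pq qp)
  moreover have "darboux_data z (a - u) {k \<in> V. br p k = 0 \<and> br q k = 0}"
    using darboux_data_centralizer[OF data z_central p q pq] by (simp add: u_def bracket_simps)
  ultimately show thesis
    using that by blast
qed

lemma hyperbolic_pairs_extend:
  assumes "hyperbolic_pairs z c V' m P Q" and "V' = {k \<in> V. br p k = 0 \<and> br q k = 0}"
    and "p \<in> V" "q \<in> V" "br p q = z" "br c p = 0" "br c q = 0"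
  shows "hyperbolic_pairs z c V (Suc m) (P(m := p)) (Q(m := q))"
  using assms br_eq_0_commute unfolding hyperbolic_pairs_def
  by (auto simp: less_Suc_eq br_self)

lemma hyperbolic_pairs_imageD:
  assumes "hyperbolic_pairs z c V m P Q" and "y \<in> P ` {..<m} \<union> Q ` {..<m}"
  shows "y \<in> V" and "br c y = 0"
  using assms unfolding hyperbolic_pairs_def by auto

lemma darboux_normal_form_lift:
  assumes V: "subspace V" and p: "p \<in> V" and q: "q \<in> V" and pq: "br p q = z"
    and a': "a' - a \<in> V" "br a' p = 0" "br a' q = 0"
    and V': "V' = {k \<in> V. br p k = 0 \<and> br q k = 0}"
    and complement: "\<And>v. v \<in> V \<Longrightarrow> \<exists>s t. v + s *s p + t *s q \<in> V'"
    and nf: "darboux_normal_form z a' V'"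
  shows "darboux_normal_form z a V"
proof -
  obtain c m P Q where c: "c - a' \<in> V'" and pairs: "hyperbolic_pairs z c V' m P Q"
    and cases: "V' = span (insert z (P ` {..<m} \<union> Q ` {..<m})) \<or>
      (\<exists>z1\<in>V'. br c z1 = - z \<and> (\<forall>j<m. br z1 (P j) = 0 \<and> br z1 (Q j) = 0) \<and>
         V' = span (insert z1 (insert z (P ` {..<m} \<union> Q ` {..<m}))))"
    using nf unfolding darboux_normal_form_def by blast
  have V'V: "V' \<subseteq> V"
    using V' by blast
  have commutes: "br k p = 0 \<and> br k q = 0" if "k \<in> V'" for k
    using that V' br_eq_0_commute by auto
  have ca: "c - a \<in> V"
    using subspace_add[OF V, of "c - a'" "a' - a"] c a' V'V by auto
  have "br c p = br a' p + br (c - a') p" "br c q = br a' q + br (c - a') q"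
    by (simp_all add: br_diff_left)
  then have "br c p = 0" "br c q = 0"
    using a' commutes[OF c] by simp_all
  then have pairs': "hyperbolic_pairs z c V (Suc m) (P(m := p)) (Q(m := q))"
    using hyperbolic_pairs_extend[OF pairs V' p q pq] by blast
  note lift = span_extend_pairs[OF V p q V'V complement]
  from cases show ?thesis
  proof
    assume "V' = span (insert z (P ` {..<m} \<union> Q ` {..<m}))"
    then have "V = span (insert z (P(m := p) ` {..<Suc m} \<union> Q(m := q) ` {..<Suc m}))"
      using lift[of "{z}"] by (simp only: Un_insert_left Un_empty_left)
    then show ?thesis
      unfolding darboux_normal_form_def using ca pairs' by blast
  next
    assume "\<exists>z1\<in>V'. br c z1 = - z \<and> (\<forall>j<m. br z1 (P j) = 0 \<and> br z1 (Q j) = 0) \<and>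
         V' = span (insert z1 (insert z (P ` {..<m} \<union> Q ` {..<m})))"
    then obtain z1 where z1: "z1 \<in> V'" "br c z1 = - z" "\<forall>j<m. br z1 (P j) = 0 \<and> br z1 (Q j) = 0"
      and span: "V' = span (insert z1 (insert z (P ` {..<m} \<union> Q ` {..<m})))"
      by blast
    have "V = span (insert z1 (insert z (P(m := p) ` {..<Suc m} \<union> Q(m := q) ` {..<Suc m})))"
      using lift[of "{z1, z}"] span by (simp only: Un_insert_left Un_empty_left)
    moreover have "\<forall>j<Suc m. br z1 ((P(m := p)) j) = 0 \<and> br z1 ((Q(m := q)) j) = 0"
      using z1(3) commutes[OF z1(1)] br_eq_0_commute by (simp add: less_Suc_eq)
    ultimately show ?thesis
      unfolding darboux_normal_form_def using ca pairs' z1 V'V by blast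
  qed
qed

theorem darboux_normal_form_exists:
  assumes z_central: "\<forall>y. br y z = 0" and z_nonzero: "z \<noteq> 0" and data: "darboux_data z a V"
  shows "darboux_normal_form z a V"
  using data
proof (induction "dim V" arbitrary: a V rule: less_induct)
  case less
  show ?case
  proof (cases "\<forall>k\<in>V. \<forall>k'\<in>V. br k k' = 0")
    case True
    then show ?thesis
      using darboux_normal_form_abelian less.prems by blast
  next
    case False
    have V: "subspace V" and VV: "\<forall>k\<in>V. \<forall>k'\<in>V. br k k' \<in> span {z}"
      using less.prems unfolding darboux_data_def by auto
    obtain p q0 c where p: "p \<in> V" and q0: "q0 \<in> V" "br p q0 = c *s z" and "c \<noteq> 0"
      using False VV by (metis in_span_singletonE scale_zero_left)
    define q where "q = inverse c *s q0"
    have q: "q \<in> V" and pq: "br p q = z"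
      unfolding q_def using subspace_scale[OF V q0(1)] q0(2) \<open>c \<noteq> 0\<close>
      by (simp_all add: br_scale_right)
    define V' where "V' = {k \<in> V. br p k = 0 \<and> br q k = 0}"
    obtain a' where a': "a' - a \<in> V" "br a' p = 0" "br a' q = 0" and data': "darboux_data z a' V'"
      using darboux_data_reduce[OF less.prems z_central p q pq] unfolding V'_def by blast
    have "p \<notin> V'"
      using pq br_anticomm[of q p] z_nonzero unfolding V'_def by auto
    then have "V' \<subset> V"
      using p unfolding V'_def by blast
    moreover have "span V' = V'" "span V = V"
      using V data' unfolding darboux_data_def by simp_all
    ultimately have "span V' \<subset> span V"
      by (simp only:)
    then have "dim V' < dim V"
      by (rule dim_psubset)
    then have "darboux_normal_form z a' V'"
      using less.hyps data' by blast
    then show ?thesis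
      using darboux_normal_form_lift[OF V p q pq a' V'_def]
        exists_shift_into_centralizer[OF less.prems p q pq]
      unfolding V'_def by blast
  qed
qed

lemma hyperbolic_pairs_independent:
  assumes S: "independent S" "finite S" and z: "z \<noteq> 0"
    and pairs: "hyperbolic_pairs z c V m P Q"
    and commute: "\<forall>j<m. \<forall>y\<in>S. br (P j) y = 0 \<and> br (Q j) y = 0"
  shows "independent (S \<union> P ` {..<m} \<union> Q ` {..<m}) \<and>
    card (S \<union> P ` {..<m} \<union> Q ` {..<m}) = card S + 2 * m"
  using pairs commute
proof (induction m)
  case 0
  then show ?case using S by simp
next
  case (Suc m)
  let ?S = "S \<union> P ` {..<m} \<union> Q ` {..<m}"
  have IH: "independent ?S \<and> card ?S = card S + 2 * m"
    using Suc unfolding hyperbolic_pairs_def by auto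
  have PQ: "br (P m) (Q m) = z" and QP: "br (Q m) (P m) = - z"
    using Suc.prems br_anticomm[of "Q m" "P m"] unfolding hyperbolic_pairs_def by auto
  have kills_S: "br (P m) y = 0" if "y \<in> ?S" for y
    using that Suc.prems unfolding hyperbolic_pairs_def by (auto simp: less_Suc_eq)
  have Q_new: "independent (insert (Q m) ?S)" "Q m \<notin> ?S"
    using independent_insert_kernel[OF module_hom_br[of "P m"], of ?S "Q m"] IH kills_S PQ z
    by auto
  have "br (P k) (Q m) = 0" if "k < m" for k
    using that Suc.prems unfolding hyperbolic_pairs_def by simp
  then have "br (Q m) (P k) = 0" if "k < m" for k
    using that br_eq_0_commute by blast
  then have kills_QS: "br (Q m) y = 0" if "y \<in> insert (Q m) ?S" for y
    using that Suc.prems unfolding hyperbolic_pairs_def by (auto simp: less_Suc_eq br_self)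
  have P_new: "independent (insert (P m) (insert (Q m) ?S))" "P m \<notin> insert (Q m) ?S"
    using independent_insert_kernel[OF module_hom_br[of "Q m"], of "insert (Q m) ?S" "P m"]
      Q_new kills_QS QP z
    by auto
  have "S \<union> P ` {..<Suc m} \<union> Q ` {..<Suc m} = insert (P m) (insert (Q m) ?S)"
    by (auto simp: lessThan_Suc)
  then show ?case
    using IH Q_new P_new S(2) by simp
qed

lemma interleave_br:
  assumes pairs: "hyperbolic_pairs z c V m P Q"
    and i: "i \<in> {1..2 * m}" and j: "j \<in> {1..2 * m}" and "i < j"
  shows "br (interleave P Q i) (interleave P Q j) = (if odd i \<and> j = i + 1 then z else 0)"
proof -
  have PQ: "\<forall>k<m. br (P k) (Q k) = z"
    and cross: "\<forall>k<m. \<forall>l<m. br (P k) (P l) = 0 \<and> br (Q k) (Q l) = 0 \<and> (k \<noteq> l \<longrightarrow> br (P k) (Q l) = 0)"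
    using pairs unfolding hyperbolic_pairs_def by auto
  then have QP: "br (Q k) (P l) = 0" if "k < m" "l < m" "k \<noteq> l" for k l
    using that br_eq_0_commute by blast
  have bounds: "1 \<le> i" "i \<le> 2 * m" "1 \<le> j" "j \<le> 2 * m"
    using i j by auto
  consider "odd i" "odd j" | "odd i" "even j" | "even i" "odd j" | "even i" "even j"
    by blast
  then show ?thesis
  proof cases
    case 1
    then have "i div 2 < m" "j div 2 < m" using bounds by presburger+
    then show ?thesis using 1 cross unfolding interleave_def by auto
  next
    case 2
    then have "i div 2 < m" "j div 2 - 1 < m" "j = i + 1 \<longleftrightarrow> i div 2 = j div 2 - 1"
      using bounds \<open>i < j\<close> by presburger+
    then show ?thesis using 2 PQ cross unfolding interleave_def by auto
  next
    case 3
    then have "i div 2 - 1 < m" "j div 2 < m" "i div 2 - 1 \<noteq> j div 2"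
      using bounds \<open>i < j\<close> by presburger+
    then show ?thesis using 3 QP unfolding interleave_def by auto
  next
    case 4
    then have "i div 2 - 1 < m" "j div 2 - 1 < m" using bounds by presburger+
    then show ?thesis using 4 cross unfolding interleave_def by auto
  qed
qed

lemma prepend_interleave_br:
  assumes pairs: "hyperbolic_pairs z c V m P Q"
    and x: "\<forall>k<m. br x (P k) = 0 \<and> br x (Q k) = 0"
    and i: "i \<in> {1..2 * m + 1}" and j: "j \<in> {1..2 * m + 1}" and "i < j"
  shows "br (prepend x (interleave P Q) i) (prepend x (interleave P Q) j) =
    (if even i \<and> j = i + 1 then z else 0)"
proof (cases "i = 1")
  case True
  have "interleave P Q (j - 1) \<in> P ` {..<m} \<union> Q ` {..<m}"
    using j \<open>i < j\<close> True interleave_image[of P Q m] by force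
  then show ?thesis
    using True \<open>i < j\<close> x unfolding prepend_def by auto
next
  case False
  have "br (interleave P Q (i - 1)) (interleave P Q (j - 1)) =
      (if odd (i - 1) \<and> j - 1 = i - 1 + 1 then z else 0)"
    using assms False by (intro interleave_br) auto
  moreover have "odd (i - 1) \<and> j - 1 = i - 1 + 1 \<longleftrightarrow> even i \<and> j = i + 1"
    using i j False by auto
  moreover have "prepend x (interleave P Q) i = interleave P Q (i - 1)"
    "prepend x (interleave P Q) j = interleave P Q (j - 1)"
    using False \<open>i < j\<close> i by (simp_all add: prepend_def)
  ultimately show ?thesis
    by simp
qed

definition derived_algebra :: "'a set"
  where "derived_algebra = span {br x y | x y. True}"

lemma br_in_derived_algebra: "br x y \<in> derived_algebra"
  unfolding derived_algebra_def by (rule span_base) blast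

lemma derived_algebra_br_eigenvector:
  assumes eigen: "\<And>x. br x w \<in> span {w}" and d: "d \<in> derived_algebra"
  shows "br d w = 0"
proof -
  have "br (br x y) w = 0" for x y
  proof -
    obtain \<xi> \<eta> where \<xi>: "br x w = \<xi> *s w" and \<eta>: "br y w = \<eta> *s w"
      using eigen by (meson in_span_singletonE)
    have "br w x = - (\<xi> *s w)"
      using \<xi> br_anticomm[of w x] by simp
    then have "br w (br x y) = 0"
      using jacobi[of x y w] by (simp add: \<xi> \<eta> bracket_simps mult.commute)
    then show ?thesis
      using br_eq_0_commute by blast
  qed
  then show ?thesis
    using module_hom.eq_0_on_span[OF module_hom_br_left, of "{br x y | x y. True}" w d] d
    unfolding derived_algebra_def by blast
qed

lemma subspace_derived_algebra: "subspace derived_algebra"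
  unfolding derived_algebra_def by (rule subspace_span)

lemma ad_eigenvector_exists:
  assumes eigen: "\<And>x. br x w \<in> span {w}" and nonzero: "br x w \<noteq> 0"
  obtains a where "br a w = w"
proof -
  obtain d where d: "br x w = d *s w"
    using eigen by (rule in_span_singletonE)
  then have "d \<noteq> 0"
    using nonzero by auto
  then have "br (inverse d *s x) w = w"
    by (simp add: br_scale_left d)
  then show thesis
    by (rule that)
qed

lemma derived_algebra_split:
  assumes dim: "dim derived_algebra = 2" and w: "w \<noteq> 0" "w \<in> derived_algebra"
    and a: "br a w = w" and ad_a: "\<And>d. d \<in> derived_algebra \<Longrightarrow> br a d \<in> span {w}"
  obtains z where "z \<in> derived_algebra" "z \<notin> span {w}" "br a z = 0"
    "derived_algebra = span {z, w}"
proof -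
  obtain v where v: "v \<in> derived_algebra" "v \<notin> span {w}"
    using dim_two_exists_notin_span_singleton[OF dim] by blast
  obtain \<gamma> where \<gamma>: "br a v = \<gamma> *s w"
    using ad_a[OF v(1)] by (rule in_span_singletonE)
  define z where "z = v - \<gamma> *s w"
  have z: "z \<in> derived_algebra"
    unfolding z_def using v(1) w(2) subspace_derived_algebra
    by (intro subspace_diff subspace_scale)
  have z_w: "z \<notin> span {w}"
  proof
    assume "z \<in> span {w}"
    moreover have "\<gamma> *s w \<in> span {w}"
      by (simp add: span_base span_scale)
    ultimately have "z + \<gamma> *s w \<in> span {w}"
      by (rule span_add)
    then show False
      using v(2) unfolding z_def by simp
  qed
  have "br a z = 0"
    unfolding z_def by (simp add: bracket_simps \<gamma> a)
  moreover have "derived_algebra = span {z, w}"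
    using dim_two_eq_span_pair[OF subspace_derived_algebra dim z w(2,1) z_w] .
  ultimately show thesis
    using that z z_w by blast
qed

definition common_brackets :: "'a \<Rightarrow> 'a \<Rightarrow> 'a \<Rightarrow> (nat \<Rightarrow> 'a) \<Rightarrow> nat \<Rightarrow> bool"
  where "common_brackets x1 x2 z zs n \<longleftrightarrow>
    br x1 x2 = x1 \<and> br x1 z = 0 \<and> br x2 z = 0 \<and> (\<forall>i\<in>{1..n}. br x1 (zs i) = 0 \<and> br (zs i) z = 0)"

definition even_brackets :: "'a \<Rightarrow> 'a \<Rightarrow> (nat \<Rightarrow> 'a) \<Rightarrow> nat \<Rightarrow> bool"
  where "even_brackets x2 z zs n \<longleftrightarrow> even n \<and>
    (\<forall>i\<in>{1..n}. br x2 (zs i) = 0) \<and>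
    (\<forall>i\<in>{1..<n}. odd i \<longrightarrow> br (zs i) (zs (i + 1)) = z) \<and>
    (\<forall>i\<in>{1..n}. \<forall>j\<in>{1..n}. i < j \<and> \<not> (odd i \<and> j = i + 1) \<longrightarrow> br (zs i) (zs j) = 0)"

definition odd_brackets :: "'a \<Rightarrow> 'a \<Rightarrow> (nat \<Rightarrow> 'a) \<Rightarrow> nat \<Rightarrow> bool"
  where "odd_brackets x2 z zs n \<longleftrightarrow> odd n \<and>
    br x2 (zs 1) = z \<and>
    (\<forall>i\<in>{2..n}. br x2 (zs i) = 0) \<and>
    (\<forall>i\<in>{2..<n}. even i \<longrightarrow> br (zs i) (zs (i + 1)) = z) \<and>
    (\<forall>i\<in>{1..n}. \<forall>j\<in>{1..n}. i < j \<and> \<not> (even i \<and> j = i + 1) \<longrightarrow> br (zs i) (zs j) = 0)"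

end

locale derived_plane = finite_dimensional_lie_algebra scale Basis br
  for scale :: "'k::field \<Rightarrow> 'a::ab_group_add \<Rightarrow> 'a" (infixr \<open>*s\<close> 75) and Basis br +
  fixes a w z :: 'a
  assumes derived_algebra_eq: "derived_algebra = span {z, w}"
    and w_nonzero: "w \<noteq> 0"
    and z_notin_span_w: "z \<notin> span {w}"
    and br_a_w: "br a w = w"
    and br_w_eigen: "br x w \<in> span {w}"
    and z_central: "br x z = 0"
    and center_subset_derived: "(\<forall>y. br k y = 0) \<Longrightarrow> k \<in> derived_algebra"
begin

definition slice :: "'a set"
  where "slice = {k. br k w = 0 \<and> br a k \<in> span {z}}"

lemma z_nonzero: "z \<noteq> 0"
  using z_notin_span_w span_zero by auto

lemma z_central_left: "br z x = 0"
  using z_central br_eq_0_commute by blast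

lemma br_in_plane: "br x y \<in> span {z, w}"
  using br_in_derived_algebra derived_algebra_eq by simp

lemma subspace_slice: "subspace slice"
proof -
  have "slice = {k. br k w = 0} \<inter> br a -` span {z}"
    unfolding slice_def by auto
  then show ?thesis
    using module_hom.subspace_kernel[OF module_hom_br_left]
      module_hom.subspace_vimage[OF module_hom_br subspace_span]
    by (simp add: subspace_inter)
qed

lemma z_in_slice: "z \<in> slice"
  unfolding slice_def using z_central br_eq_0_commute by (auto simp: span_zero)

lemma br_w_slice: "k \<in> slice \<Longrightarrow> br w k = 0"
  unfolding slice_def using br_eq_0_commute by auto

lemma decompose_along_slice:
  obtains \<phi> s k where "k \<in> slice" "y = \<phi> *s a + s *s w + k"
proof -
  obtain \<phi> where \<phi>: "br y w = \<phi> *s w"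
    using br_w_eigen by (meson in_span_singletonE)
  obtain t s where ts: "br a y = t *s z + s *s w"
    using br_in_plane by (meson in_span_pairE)
  let ?k = "y - \<phi> *s a - s *s w"
  have "br ?k w = 0" "br a ?k = t *s z"
    by (simp_all add: bracket_simps \<phi> br_a_w ts)
  then have "?k \<in> slice"
    unfolding slice_def by (simp add: span_base span_scale)
  then show thesis
    using that[of ?k \<phi> s] by (simp add: algebra_simps)
qed

lemma br_slice_slice:
  assumes k: "k \<in> slice" and k': "k' \<in> slice"
  shows "br k k' \<in> span {z}"
proof -
  obtain t s where ts: "br k k' = t *s z + s *s w"
    using br_in_plane by (meson in_span_pairE)
  have "br a k \<in> span {z}" "br a k' \<in> span {z}"
    using k k' unfolding slice_def by auto
  then obtain \<alpha> \<beta> where \<alpha>: "br a k = \<alpha> *s z" and \<beta>: "br a k' = \<beta> *s z"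
    by (meson in_span_singletonE)
  have "br k' a = - (\<beta> *s z)"
    using \<beta> br_anticomm[of k' a] by simp
  then have "br a (br k k') = 0"
    using jacobi[of a k k'] by (simp add: \<alpha> bracket_simps z_central)
  then have "s *s w = 0"
    by (simp add: ts bracket_simps z_central br_a_w)
  then show ?thesis
    using w_nonzero ts by (simp add: span_base span_scale)
qed

lemma darboux_data_slice: "darboux_data z a slice"
  unfolding darboux_data_def
proof (intro conjI ballI impI subspace_slice z_in_slice)
  show "br a k \<in> span {z}" if "k \<in> slice" for k
    using that unfolding slice_def by simp
  show "br k k' \<in> span {z}" if "k \<in> slice" "k' \<in> slice" for k k'
    using that by (rule br_slice_slice)
next
  fix k assume k: "k \<in> slice" and radical: "br a k = 0 \<and> (\<forall>k'\<in>slice. br k k' = 0)"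
  have "br k y = 0" for y
  proof -
    obtain \<phi> s k' where "k' \<in> slice" "y = \<phi> *s a + s *s w + k'"
      by (rule decompose_along_slice)
    moreover have "br k a = 0" "br k w = 0"
      using radical k br_eq_0_commute unfolding slice_def by auto
    ultimately show ?thesis
      using radical by (simp add: bracket_simps)
  qed
  then have "k \<in> span {z, w}"
    using center_subset_derived derived_algebra_eq by auto
  then obtain t s where ts: "k = t *s z + s *s w"
    by (rule in_span_pairE)
  then have "s *s w = 0"
    using radical by (simp add: bracket_simps z_central br_a_w)
  then show "k \<in> span {z}"
    using ts w_nonzero by (simp add: span_base span_scale)
qed

lemma slice_neq_line: "slice \<noteq> span {z}"
proof
  assume slice: "slice = span {z}"
  have "br x y \<in> span {w}" for x y
  proof -
    obtain \<phi> s k where "k \<in> slice" "y = \<phi> *s a + s *s w + k"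
      by (rule decompose_along_slice)
    moreover obtain \<phi>' s' k' where "k' \<in> slice" "x = \<phi>' *s a + s' *s w + k'"
      by (rule decompose_along_slice)
    ultimately obtain t t' where "y = \<phi> *s a + s *s w + t *s z" "x = \<phi>' *s a + s' *s w + t' *s z"
      using slice by (metis in_span_singletonE)
    then have "br x y = (\<phi>' * s - s' * \<phi>) *s w"
      using br_anticomm[of w a]
      by (simp add: bracket_simps br_a_w z_central z_central_left br_self algebra_simps)
    then show ?thesis
      by (simp add: span_base span_scale)
  qed
  then have "derived_algebra \<subseteq> span {w}"
    unfolding derived_algebra_def by (intro span_minimal) auto
  then show False
    using derived_algebra_eq z_notin_span_w span_base[of z "{z, w}"] by auto
qed

lemma br_shift_w:
  assumes "c - a \<in> slice"
  shows "br c w = w"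
proof -
  have "br c w = br a w + br (c - a) w"
    by (simp add: br_diff_left)
  then show ?thesis
    using assms br_a_w unfolding slice_def by simp
qed

lemma br_w_neg_shift:
  assumes "c - a \<in> slice"
  shows "br w (- c) = w"
  using br_shift_w[OF assms] br_anticomm[of w c] by (simp add: br_neg_right)

lemma br_shift_slice:
  assumes "c - a \<in> slice" and "k \<in> slice"
  shows "br c k \<in> span {z}"
proof -
  have "br c k = br a k + br (c - a) k"
    by (simp add: br_diff_left)
  then show ?thesis
    using assms br_slice_slice span_add unfolding slice_def by fastforce
qed

lemma slice_spans:
  assumes c: "c - a \<in> slice" and X: "slice \<subseteq> span X" "w \<in> span X" "- c \<in> span X"
  shows "span X = UNIV"
proof -
  have "- (- c) \<in> span X" "c - a \<in> span X"
    using X c span_neg by blast+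
  then have "- (- c) - (c - a) \<in> span X"
    by (rule span_diff)
  then have a: "a \<in> span X"
    by simp
  have "y \<in> span X" for y
  proof -
    obtain \<phi> s k where "k \<in> slice" "y = \<phi> *s a + s *s w + k"
      by (rule decompose_along_slice)
    then show ?thesis
      using a X by (simp add: span_add span_scale subsetD)
  qed
  then show ?thesis
    by blast
qed

lemma slice_basis_extends:
  assumes c: "c - a \<in> slice"
    and S: "independent S" "finite S" "S \<subseteq> slice" "slice \<subseteq> span S"
  shows "independent (insert (- c) (insert w S))"
    and "card (insert (- c) (insert w S)) = card S + 2"
    and "span (insert (- c) (insert w S)) = UNIV"
proof -
  have "module_hom scale scale (br c \<circ> br c)"
    using module_hom_br module_hom_br by (rule module_hom_compose)
  moreover have "(br c \<circ> br c) k = 0" if k: "k \<in> S" for k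
  proof -
    have "br c k \<in> span {z}"
      using br_shift_slice[OF c] S(3) k by blast
    then obtain t where "br c k = t *s z"
      by (rule in_span_singletonE)
    then show ?thesis
      by (simp add: br_scale_right z_central)
  qed
  moreover have "(br c \<circ> br c) w = w"
    using br_shift_w[OF c] by simp
  ultimately have w_new: "independent (insert w S)" "w \<notin> S"
    using independent_insert_kernel[of "br c \<circ> br c" S w] S(1) w_nonzero by auto
  have "br w k = 0" if "k \<in> insert w S" for k
    using that S(3) br_w_slice br_self by auto
  moreover note br_w_neg_shift[OF c]
  ultimately have c_new: "independent (insert (- c) (insert w S))" "- c \<notin> insert w S"
    using independent_insert_kernel[OF module_hom_br[of w], of "insert w S" "- c"] w_new w_nonzero
    by auto
  show "independent (insert (- c) (insert w S))"
    by (fact c_new(1))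
  show "card (insert (- c) (insert w S)) = card S + 2"
    using c_new(2) w_new(2) S(2) by simp
  show "span (insert (- c) (insert w S)) = UNIV"
  proof (rule slice_spans[OF c])
    show "slice \<subseteq> span (insert (- c) (insert w S))"
      using S(4) span_mono[of S "insert (- c) (insert w S)"] by blast
  qed (simp_all add: span_base)
qed

lemma slice_pairs_basis:
  assumes c: "c - a \<in> slice" and pairs: "hyperbolic_pairs z c slice m P Q"
    and S: "independent S" "finite S" "S \<subseteq> slice"
    and commute: "\<forall>j<m. \<forall>y\<in>S. br (P j) y = 0 \<and> br (Q j) y = 0"
    and span_slice: "slice = span (S \<union> (P ` {..<m} \<union> Q ` {..<m}))"
  defines "B \<equiv> insert (- c) (insert w (S \<union> (P ` {..<m} \<union> Q ` {..<m})))"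
  shows "card B = card S + 2 * m + 2 \<and> independent B \<and> span B = UNIV"
proof -
  let ?S = "S \<union> P ` {..<m} \<union> Q ` {..<m}"
  have "independent ?S" "card ?S = card S + 2 * m"
    using hyperbolic_pairs_independent[OF S(1,2) z_nonzero pairs commute] by simp_all
  moreover have "?S \<subseteq> slice"
    using S(3) hyperbolic_pairs_imageD(1)[OF pairs] by blast
  moreover have "slice \<subseteq> span ?S"
    using span_slice by (simp add: Un_assoc)
  ultimately show ?thesis
    using slice_basis_extends[OF c, of ?S] S(2) unfolding B_def by (simp add: Un_assoc)
qed

lemma classification_even:
  assumes c: "c - a \<in> slice" and pairs: "hyperbolic_pairs z c slice m P Q"
    and span_slice: "slice = span (insert z (P ` {..<m} \<union> Q ` {..<m}))"
  shows "m > 0"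
    and "let B = {w, - c, z} \<union> interleave P Q ` {1..2 * m} in
      card B = 2 * m + 3 \<and> independent B \<and> span B = UNIV"
    and "common_brackets w (- c) z (interleave P Q) (2 * m)"
    and "even_brackets (- c) z (interleave P Q) (2 * m)"
proof -
  show "m > 0"
    using span_slice slice_neq_line by (cases m) auto
  have "{w, - c, z} \<union> interleave P Q ` {1..2 * m} =
      insert (- c) (insert w ({z} \<union> (P ` {..<m} \<union> Q ` {..<m})))"
    unfolding interleave_image by auto
  then show "let B = {w, - c, z} \<union> interleave P Q ` {1..2 * m} in
      card B = 2 * m + 3 \<and> independent B \<and> span B = UNIV"
    using slice_pairs_basis[OF c pairs, of "{z}"] z_nonzero z_in_slice span_slice
    by (simp add: z_central)
  have zs: "interleave P Q i \<in> P ` {..<m} \<union> Q ` {..<m}" if "i \<in> {1..2 * m}" for i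
    using that interleave_image[of P Q m] by blast
  show "common_brackets w (- c) z (interleave P Q) (2 * m)"
    unfolding common_brackets_def using br_w_neg_shift[OF c] br_w_slice
      hyperbolic_pairs_imageD(1)[OF pairs zs] by (simp add: z_central)
  have "br (interleave P Q i) (interleave P Q (i + 1)) = z" if "i \<in> {1..<2 * m}" "odd i" for i
    using interleave_br[OF pairs, of i "i + 1"] that by simp
  moreover have "br (interleave P Q i) (interleave P Q j) = 0"
    if "i \<in> {1..2 * m}" "j \<in> {1..2 * m}" "i < j \<and> \<not> (odd i \<and> j = i + 1)" for i j
    using interleave_br[OF pairs, of i j] that by auto
  ultimately show "even_brackets (- c) z (interleave P Q) (2 * m)"
    unfolding even_brackets_def using hyperbolic_pairs_imageD(2)[OF pairs zs]
    by (simp add: br_neg_left)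
qed

lemma classification_odd:
  assumes c: "c - a \<in> slice" and pairs: "hyperbolic_pairs z c slice m P Q"
    and z1: "z1 \<in> slice" "br c z1 = - z" "\<forall>j<m. br z1 (P j) = 0 \<and> br z1 (Q j) = 0"
    and span_slice: "slice = span (insert z1 (insert z (P ` {..<m} \<union> Q ` {..<m})))"
  shows "let B = {w, - c, z} \<union> prepend z1 (interleave P Q) ` {1..2 * m + 1} in
      card B = (2 * m + 1) + 3 \<and> independent B \<and> span B = UNIV"
    and "common_brackets w (- c) z (prepend z1 (interleave P Q)) (2 * m + 1)"
    and "odd_brackets (- c) z (prepend z1 (interleave P Q)) (2 * m + 1)"
proof -
  define zs where "zs = prepend z1 (interleave P Q)"
  have "independent {z1, z}" "z1 \<notin> {z}"
    using independent_insert_kernel[OF module_hom_br[of c], of "{z}" z1] z1(2) z_nonzero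
    by (simp_all add: z_central)
  moreover have "{w, - c, z} \<union> zs ` {1..2 * m + 1} =
      insert (- c) (insert w ({z1, z} \<union> (P ` {..<m} \<union> Q ` {..<m})))"
    unfolding zs_def prepend_interleave_image by auto
  ultimately show "let B = {w, - c, z} \<union> prepend z1 (interleave P Q) ` {1..2 * m + 1} in
      card B = (2 * m + 1) + 3 \<and> independent B \<and> span B = UNIV"
    using slice_pairs_basis[OF c pairs, of "{z1, z}"] z1 z_in_slice span_slice br_eq_0_commute
    unfolding zs_def[symmetric] by (simp add: z_central z_central_left)
  have "zs i \<in> insert z1 (P ` {..<m} \<union> Q ` {..<m})" if "i \<in> {1..2 * m + 1}" for i
    using imageI[OF that, of zs] unfolding zs_def prepend_interleave_image .
  then have "zs i \<in> slice" if "i \<in> {1..2 * m + 1}" for i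
    using that z1(1) hyperbolic_pairs_imageD(1)[OF pairs] by blast
  then show "common_brackets w (- c) z (prepend z1 (interleave P Q)) (2 * m + 1)"
    unfolding zs_def[symmetric] common_brackets_def using br_w_neg_shift[OF c] br_w_slice
    by (simp add: z_central)
  have zs_PQ: "zs i \<in> P ` {..<m} \<union> Q ` {..<m}" if "i \<in> {2..2 * m + 1}" for i
    using that interleave_image[of P Q m] unfolding zs_def prepend_def by force
  have zs_br: "br (zs i) (zs j) = (if even i \<and> j = i + 1 then z else 0)"
    if "i \<in> {1..2 * m + 1}" "j \<in> {1..2 * m + 1}" "i < j" for i j
    using prepend_interleave_br[OF pairs z1(3)] that unfolding zs_def by blast
  show "odd_brackets (- c) z (prepend z1 (interleave P Q)) (2 * m + 1)"
    unfolding zs_def[symmetric] odd_brackets_def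
  proof (intro conjI ballI impI)
    show "br (- c) (zs 1) = z"
      using z1(2) by (simp add: zs_def prepend_def br_neg_left)
    show "br (- c) (zs i) = 0" if "i \<in> {2..2 * m + 1}" for i
      using hyperbolic_pairs_imageD(2)[OF pairs zs_PQ[OF that]] by (simp add: br_neg_left)
    show "br (zs i) (zs (i + 1)) = z" if "i \<in> {2..<2 * m + 1}" "even i" for i
      using zs_br[of i "i + 1"] that by simp
    show "br (zs i) (zs j) = 0"
      if "i \<in> {1..2 * m + 1}" "j \<in> {1..2 * m + 1}" "i < j \<and> \<not> (even i \<and> j = i + 1)" for i j
      using zs_br[of i j] that by auto
  qed simp
qed

theorem classification:
  "\<exists>n x1 x2 z zs. n > 0 \<and>
    (let B = {x1, x2, z} \<union> zs ` {1..n} in card B = n + 3 \<and> independent B \<and> span B = UNIV) \<and>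
    common_brackets x1 x2 z zs n \<and> (even_brackets x2 z zs n \<or> odd_brackets x2 z zs n)"
proof -
  have "darboux_normal_form z a slice"
    using darboux_normal_form_exists z_central z_nonzero darboux_data_slice by blast
  then obtain c m P Q where c: "c - a \<in> slice" and pairs: "hyperbolic_pairs z c slice m P Q"
    and cases: "slice = span (insert z (P ` {..<m} \<union> Q ` {..<m})) \<or>
      (\<exists>z1\<in>slice. br c z1 = - z \<and> (\<forall>j<m. br z1 (P j) = 0 \<and> br z1 (Q j) = 0) \<and>
         slice = span (insert z1 (insert z (P ` {..<m} \<union> Q ` {..<m}))))"
    unfolding darboux_normal_form_def by blast
  from cases show ?thesis
  proof
    assume even: "slice = span (insert z (P ` {..<m} \<union> Q ` {..<m}))"
    show ?thesis
      by (rule exI[of _ "2 * m"], rule exI[of _ w], rule exI[of _ "- c"], rule exI[of _ z],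
          rule exI[of _ "interleave P Q"])
        (use classification_even[OF c pairs even] in simp)
  next
    assume "\<exists>z1\<in>slice. br c z1 = - z \<and> (\<forall>j<m. br z1 (P j) = 0 \<and> br z1 (Q j) = 0) \<and>
         slice = span (insert z1 (insert z (P ` {..<m} \<union> Q ` {..<m})))"
    then obtain z1 where z1: "z1 \<in> slice" "br c z1 = - z" "\<forall>j<m. br z1 (P j) = 0 \<and> br z1 (Q j) = 0"
      and odd: "slice = span (insert z1 (insert z (P ` {..<m} \<union> Q ` {..<m})))"
      by blast
    show ?thesis
      by (rule exI[of _ "2 * m + 1"], rule exI[of _ w], rule exI[of _ "- c"], rule exI[of _ z],
          rule exI[of _ "prepend z1 (interleave P Q)"])
        (use classification_odd[OF c pairs z1 odd] in simp)
  qed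
qed

end

context finite_dimensional_lie_algebra
begin

lemma derived_plane_exists:
  assumes dim: "dim derived_algebra = 2" and w: "w \<noteq> 0" "w \<in> derived_algebra"
    and a: "br a w = w" and ad_derived: "\<And>x d. d \<in> derived_algebra \<Longrightarrow> br x d \<in> span {w}"
    and center: "\<And>k. \<forall>y. br k y = 0 \<Longrightarrow> k \<in> derived_algebra"
  obtains z where "derived_plane scale Basis br a w z"
proof -
  obtain z where z: "z \<in> derived_algebra" "z \<notin> span {w}" "br a z = 0"
    and plane: "derived_algebra = span {z, w}"
    using derived_algebra_split[OF dim w a ad_derived] by blast
  have eigen: "br x w \<in> span {w}" for x
    using ad_derived w(2) by blast
  have z_derived: "br z d = 0" if "d \<in> derived_algebra" for d
  proof -
    have "br z w = 0"
      using derived_algebra_br_eigenvector[OF eigen z(1)] .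
    then have "br z d' = 0" if "d' \<in> {z, w}" for d'
      using that br_self by auto
    then show ?thesis
      using module_hom.eq_0_on_span[OF module_hom_br] that plane by blast
  qed
  have "br y z = 0" for y
  proof -
    obtain \<epsilon> where \<epsilon>: "br y z = \<epsilon> *s w"
      using ad_derived[OF z(1)] by (rule in_span_singletonE)
    have "br z y = - (\<epsilon> *s w)"
      using \<epsilon> br_anticomm[of z y] by simp
    moreover have "br z (br y a) = 0"
      using z_derived br_in_derived_algebra by blast
    ultimately have "\<epsilon> *s w = 0"
      using jacobi[of y a z] by (simp add: z(3) bracket_simps a)
    then show ?thesis
      using \<epsilon> by simp
  qed
  then have "derived_plane scale Basis br a w z"
    using plane w(1) z(2) a eigen center by unfold_locales auto
  then show thesis
    by (rule that)
qed

end

locale complex_lie_algebra = finite_dimensional_lie_algebra scale Basis br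
  for scale :: "complex \<Rightarrow> 'a::ab_group_add \<Rightarrow> 'a" (infixr \<open>*s\<close> 75) and Basis br
begin

lemma lcs_1_eq_derived_algebra: "lcs scale br 1 = derived_algebra"
  unfolding derived_algebra_def by simp

lemma center_subset_derived_algebra:
  assumes pure: "pure_lie scale br" and central: "\<forall>y. br k y = 0"
  shows "k \<in> derived_algebra"
proof (rule ccontr)
  assume "k \<notin> derived_algebra"
  then obtain J where J: "subspace J" "derived_algebra \<subseteq> J" "span {k} \<inter> J = {0}"
    "{u + v | u v. u \<in> span {k} \<and> v \<in> J} = UNIV"
    by (rule exists_complement_of_line[OF subspace_derived_algebra])
  have central_span: "br u y = 0" if "u \<in> span {k}" for u y
    using that central by (auto simp: span_singleton br_scale_left)
  have "lie_ideal scale br (span {k})"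
    unfolding lie_ideal_def
  proof (intro conjI allI impI subspace_span)
    fix x y assume "y \<in> span {k}"
    then have "br x y = 0"
      using central_span br_eq_0_commute by blast
    then show "br x y \<in> span {k}"
      by (simp add: span_zero)
  qed
  moreover have "lie_ideal scale br J"
    unfolding lie_ideal_def using J br_in_derived_algebra by blast
  moreover have "span {k} \<noteq> {0}"
    using \<open>k \<notin> derived_algebra\<close> subspace_0[OF subspace_derived_algebra] span_base[of k "{k}"]
    by auto
  moreover have "\<forall>u\<in>span {k}. \<forall>v\<in>span {k}. br u v = 0"
    using central_span by blast
  ultimately show False
    using pure J(3,4) unfolding pure_lie_def by blast
qed

lemma derived_plane_from_lcs:
  assumes pure: "pure_lie scale br" and dim1: "dim (lcs scale br 1) = 2"
    and dim2: "dim (lcs scale br 2) = 1" and dim3: "dim (lcs scale br 3) = 1"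
  obtains a w z where "derived_plane scale Basis br a w z"
proof -
  let ?L2 = "span {br x y | x y. y \<in> derived_algebra}"
  have lcs2: "lcs scale br 2 = ?L2" and lcs3: "lcs scale br 3 = span {br x y | x y. y \<in> ?L2}"
    by (simp_all add: numeral_2_eq_2 numeral_3_eq_3 derived_algebra_def)
  have "dim ?L2 = 1"
    using dim2 lcs2 by simp
  then obtain w where w: "w \<noteq> 0" "?L2 = span {w}"
    by (rule subspace_dim_one_eq_span_singleton[OF subspace_span])
  have ad_derived: "br x d \<in> span {w}" if "d \<in> derived_algebra" for x d
    using that w(2) span_base[of "br x d" "{br x y | x y. y \<in> derived_algebra}"] by blast
  have "?L2 \<subseteq> derived_algebra"
    using br_in_derived_algebra subspace_derived_algebra by (intro span_minimal) auto
  then have w_derived: "w \<in> derived_algebra"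
    using w(2) span_base[of w "{w}"] by blast
  have "\<exists>x. br x w \<noteq> 0"
  proof (rule ccontr)
    assume "\<nexists>x. br x w \<noteq> 0"
    then have "br x y = 0" if "y \<in> ?L2" for x y
      using that w(2) by (auto simp: span_singleton br_scale_right)
    then have "lcs scale br 3 \<subseteq> span {0}"
      unfolding lcs3 by (intro span_mono) auto
    then show False
      using dim3 dim_subset[of "lcs scale br 3" "span {0}"] by simp
  qed
  then obtain x where "br x w \<noteq> 0"
    by blast
  then obtain a where a: "br a w = w"
    using ad_eigenvector_exists ad_derived[OF w_derived] by blast
  have "dim derived_algebra = 2"
    using dim1 by (simp only: lcs_1_eq_derived_algebra)
  then obtain z where "derived_plane scale Basis br a w z"
    using derived_plane_exists[OF _ w(1) w_derived a ad_derived]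
      center_subset_derived_algebra[OF pure] by blast
  then show thesis
    by (rule that)
qed

end

lemma complex_lie_algebraI:
  fixes sc :: "complex \<Rightarrow> 'a::ab_group_add \<Rightarrow> 'a"
  assumes lie: "lie_algebra sc br" and fin: "fin_dim sc"
  obtains Basis where "complex_lie_algebra sc Basis br"
proof -
  have vs: "vector_space sc"
    using lie unfolding lie_algebra_def by blast
  interpret vector_space sc by (fact vs)
  obtain B0 where B0: "finite B0" "span B0 = UNIV"
    using fin unfolding fin_dim_def by blast
  obtain B where B: "B \<subseteq> B0" "independent B" "B0 \<subseteq> span B"
    using maximal_independent_subset[of B0] by blast
  have "span B = UNIV"
    using B0(2) span_mono[OF B(3)] by (auto simp: span_span)
  then have "finite_dimensional_vector_space sc B"
    using B B0(1) finite_subset by unfold_locales auto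
  moreover have "finite_dimensional_lie_algebra_axioms sc br"
    using lie unfolding lie_algebra_def Vector_Spaces.linear_iff
    by unfold_locales auto
  ultimately have "complex_lie_algebra sc B br"
    unfolding complex_lie_algebra_def finite_dimensional_lie_algebra_def by blast
  then show thesis
    by (rule that)
qed

theorem theorem3p4:
  fixes sc :: "complex \<Rightarrow> 'a::ab_group_add \<Rightarrow> 'a"
    and br :: "'a \<Rightarrow> 'a \<Rightarrow> 'a"
  assumes "lie_algebra sc br"
    and "fin_dim sc"
    and "pure_lie sc br"
    and "\<not> nilpotent_lie sc br"
    and "solvable_lie sc br"
    and "breadth sc br = 2"
    and "vector_space.dim sc (lcs sc br 1) = 2"
    and "\<forall>k\<ge>2. vector_space.dim sc (lcs sc br k) = 1"
  shows "\<exists>(n::nat) x1 x2 z (zs :: nat \<Rightarrow> 'a). n > 0 \<and>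
     (let B = {x1, x2, z} \<union> zs ` {1..n} in
        card B = n + 3 \<and> \<not> module.dependent sc B \<and> module.span sc B = UNIV) \<and>
     br x1 x2 = x1 \<and> br x1 z = 0 \<and> br x2 z = 0 \<and>
     (\<forall>i\<in>{1..n}. br x1 (zs i) = 0 \<and> br (zs i) z = 0) \<and>
     ((even n \<and>
         (\<forall>i\<in>{1..n}. br x2 (zs i) = 0) \<and>
         (\<forall>i\<in>{1..<n}. odd i \<longrightarrow> br (zs i) (zs (i + 1)) = z) \<and>
         (\<forall>i\<in>{1..n}. \<forall>j\<in>{1..n}. i < j \<and> \<not> (odd i \<and> j = i + 1) \<longrightarrow> br (zs i) (zs j) = 0))
      \<or>
      (odd n \<and>
         br x2 (zs 1) = z \<and>
         (\<forall>i\<in>{2..n}. br x2 (zs i) = 0) \<and>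
         (\<forall>i\<in>{2..<n}. even i \<longrightarrow> br (zs i) (zs (i + 1)) = z) \<and>
         (\<forall>i\<in>{1..n}. \<forall>j\<in>{1..n}. i < j \<and> \<not> (even i \<and> j = i + 1) \<longrightarrow> br (zs i) (zs j) = 0)))"
proof -
  obtain Basis where "complex_lie_algebra sc Basis br"
    using assms(1,2) by (rule complex_lie_algebraI)
  then interpret complex_lie_algebra sc Basis br .
  have "dim (lcs sc br 2) = 1" "dim (lcs sc br 3) = 1"
    using assms(8) by simp_all
  then obtain a w z where "derived_plane sc Basis br a w z"
    by (rule derived_plane_from_lcs[OF assms(3,7)])
  then interpret derived_plane sc Basis br a w z .
  show ?thesis
    using classification
    unfolding common_brackets_def even_brackets_def odd_brackets_def by simp
qed

end
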